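(* Let $\mathbb B^2=\{z\in\mathbb C^2:|z|<1\}$ and let $F:\mathbb B^2\to \mathbb B^2$ be holomorphic. Suppose there exist two complex geodesics $\varphi, \eta:\mathbb D \to \mathbb B^2$ such that $\varphi(\mathbb D)\cap \eta(\mathbb D)=\{z\}$ for some $z\in \mathbb B^2$ and $F$ is an isometry for the Kobayashi metric on $\varphi$ and on $\eta$ (i.e. $F\circ\varphi$ and $F\circ\eta$ are complex geodesics of $\mathbb B^2$). Then $F$ is an automorphism of $\mathbb B^2$.
   Context: $\mathbb D=\{\zeta\in\mathbb C:|\zeta|<1\}$. A complex geodesic of $\mathbb B^2$ is a holomorphic map $\varphi:\mathbb D\to\mathbb B^2$ which is an isometry between the hyperbolic distance of $\mathbb D$ and the Kobayashi distance of $\mathbb B^2$. *)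

theory Defs
  imports "HOL-Analysis.Analysis"
begin

text \<open>The unit disc and the unit ball of C^2 (Euclidean norm on complex * complex).\<close>
definition unit_disc :: "complex set" where
  "unit_disc = ball 0 1"

definition B2 :: "(complex \<times> complex) set" where
  "B2 = ball 0 1"

definition cscale2 :: "complex \<Rightarrow> complex \<times> complex \<Rightarrow> complex \<times> complex" where
  "cscale2 c v = (c * fst v, c * snd v)"

definition holo2 :: "(complex \<times> complex \<Rightarrow> complex \<times> complex) \<Rightarrow> (complex \<times> complex) set \<Rightarrow> bool" where
  "holo2 F U \<longleftrightarrow> (\<forall>z\<in>U. \<exists>D. (F has_derivative D) (at z) \<and> (\<forall>c v. D (cscale2 c v) = cscale2 c (D v)))"

definition holo_disc :: "(complex \<Rightarrow> complex \<times> complex) \<Rightarrow> bool" where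
  "holo_disc \<phi> \<longleftrightarrow> (\<lambda>t. fst (\<phi> t)) holomorphic_on unit_disc \<and> (\<lambda>t. snd (\<phi> t)) holomorphic_on unit_disc"

definition hyp_dist :: "complex \<Rightarrow> complex \<Rightarrow> real" where
  "hyp_dist a b = artanh (cmod (a - b) / cmod (1 - cnj a * b))"

definition kobayashi_dist :: "(complex \<times> complex) set \<Rightarrow> complex \<times> complex \<Rightarrow> complex \<times> complex \<Rightarrow> real" where
  "kobayashi_dist \<Omega> z w = Inf {(\<Sum>j<m. hyp_dist (a j) (b j)) | m p a b f.
      p 0 = z \<and> p m = w \<and>
      (\<forall>j<m. holo_disc (f j) \<and> f j ` unit_disc \<subseteq> \<Omega> \<and> a j \<in> unit_disc \<and> b j \<in> unit_disc \<and>
              f j (a j) = p j \<and> f j (b j) = p (Suc j))}"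

definition complex_geodesic :: "(complex \<Rightarrow> complex \<times> complex) \<Rightarrow> bool" where
  "complex_geodesic \<phi> \<longleftrightarrow> holo_disc \<phi> \<and> \<phi> ` unit_disc \<subseteq> B2 \<and>
     (\<forall>a\<in>unit_disc. \<forall>b\<in>unit_disc. kobayashi_dist B2 (\<phi> a) (\<phi> b) = hyp_dist a b)"

definition automorphism_B2 :: "(complex \<times> complex \<Rightarrow> complex \<times> complex) \<Rightarrow> bool" where
  "automorphism_B2 F \<longleftrightarrow> holo2 F B2 \<and> bij_betw F B2 B2 \<and> holo2 (inv_into B2 F) B2"

end

theory Submission
  imports Defs "HOL-Complex_Analysis.Complex_Analysis"
begin

text \<open>Normalise by automorphisms T1, T2 of the ball with T1 z = 0 and T2 (F z) = 0.
  Pushing radial discs forward by T1\<inverse> shows that the Kobayashi distance from z to p is at most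
  artanh \<parallel>T1 p\<parallel>; along a complex geodesic through z this forces equality in the Schwarz lemma,
  so T1 maps it, up to a Moebius reparametrisation, onto a linear disc \<zeta> \<mapsto> \<zeta> v.
  Hence G = T2 \<circ> F \<circ> T1\<inverse> is a holomorphic self-map of the ball fixing 0 which maps two complex
  lines, independent because the geodesics meet only at z, isometrically onto complex lines.
  By the Schwarz lemma on slices G'(0) is a contraction; being isometric on two independent
  lines it is unitary, and Cartan's argument on each slice gives G = G'(0).\<close>

lemma mem_B2: "x \<in> B2 \<longleftrightarrow> norm x < 1"
  by (simp add: B2_def)

lemma mem_unit_disc: "t \<in> unit_disc \<longleftrightarrow> cmod t < 1"
  by (simp add: unit_disc_def)

lemma open_B2: "open B2"
  by (simp add: B2_def)

lemma cscale2_0 [simp]: "cscale2 0 v = 0"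
  by (simp add: cscale2_def zero_prod_def)

lemma cscale2_1 [simp]: "cscale2 1 v = v"
  by (simp add: cscale2_def)

lemma cscale2_assoc: "cscale2 a (cscale2 b v) = cscale2 (a * b) v"
  by (simp add: cscale2_def algebra_simps)

lemma norm_cscale2: "norm (cscale2 c v) = cmod c * norm v"
  by (cases v) (simp add: cscale2_def norm_Pair norm_mult power_mult_distrib real_sqrt_mult
      flip: distrib_left)

definition cinner :: "complex \<times> complex \<Rightarrow> complex \<times> complex \<Rightarrow> complex" where
  "cinner x y = fst x * cnj (fst y) + snd x * cnj (snd y)"

lemma cinner_self: "cinner x x = complex_of_real ((norm x)\<^sup>2)"
proof -
  have "(norm x)\<^sup>2 = (cmod (fst x))\<^sup>2 + (cmod (snd x))\<^sup>2"
    by (cases x) (simp add: norm_Pair)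
  then show ?thesis
    by (simp only: cinner_def of_real_add complex_norm_square)
qed

lemma norm_eq_iff_cinner_self: "norm x = norm y \<longleftrightarrow> cinner x x = cinner y y"
  unfolding cinner_self of_real_eq_iff by simp

lemma cinner_add_left: "cinner (x + y) z = cinner x z + cinner y z"
  by (simp add: cinner_def algebra_simps)

lemma cinner_cscale2_left: "cinner (cscale2 c x) y = c * cinner x y"
  by (simp add: cinner_def cscale2_def algebra_simps)

lemma cinner_Cauchy_Schwarz: "cmod (cinner x y) \<le> norm x * norm y"
proof -
  have "cmod (cinner x y) \<le> (cmod (fst x), cmod (snd x)) \<bullet> (cmod (fst y), cmod (snd y))"
    by (simp add: cinner_def norm_mult norm_triangle_ineq[THEN order_trans])
  also have "\<dots> \<le> norm x * norm y"
    using norm_cauchy_schwarz[of "(cmod (fst x), cmod (snd x))" "(cmod (fst y), cmod (snd y))"]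
    by (cases x, cases y) (simp add: norm_Pair)
  finally show ?thesis .
qed

lemma norm_diff_projection_squared:
  assumes "norm e = 1"
  shows "(norm (x - cscale2 (cinner x e) e))\<^sup>2 = (norm x)\<^sup>2 - (cmod (cinner x e))\<^sup>2"
proof -
  define c where "c = cinner x e"
  have "cinner (x - cscale2 c e) (x - cscale2 c e)
      = cinner x x - cnj c * cinner x e - c * cinner e x + c * cnj c * cinner e e"
    by (simp add: cinner_def cscale2_def algebra_simps)
  also have "\<dots> = cinner x x - c * cnj c"
    using assms by (simp add: c_def cinner_self) (simp add: cinner_def)
  finally have "complex_of_real ((norm (x - cscale2 c e))\<^sup>2) = complex_of_real ((norm x)\<^sup>2 - (cmod c)\<^sup>2)"
    by (simp only: cinner_self complex_norm_square of_real_diff)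
  then show ?thesis
    by (simp only: of_real_eq_iff c_def)
qed

lemma norm_add_real_cscale2_squared:
  "(norm (x + cscale2 (complex_of_real t) w))\<^sup>2 = (norm x)\<^sup>2 + 2 * t * Re (cinner x w) + t\<^sup>2 * (norm w)\<^sup>2"
proof -
  have "cinner (x + cscale2 (complex_of_real t) w) (x + cscale2 (complex_of_real t) w)
      = cinner x x + complex_of_real t * (cinner x w + cnj (cinner x w)) + (complex_of_real t)\<^sup>2 * cinner w w"
    by (simp add: cinner_def cscale2_def algebra_simps power2_eq_square)
  from arg_cong[OF this, of Re] show ?thesis
    by (simp add: cinner_self power2_eq_square)
qed

definition clinear2 :: "(complex \<times> complex \<Rightarrow> complex \<times> complex) \<Rightarrow> bool" where
  "clinear2 L \<longleftrightarrow> linear L \<and> (\<forall>c v. L (cscale2 c v) = cscale2 c (L v))"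

lemma clinear2_linear: "clinear2 L \<Longrightarrow> linear L"
  by (simp add: clinear2_def)

lemma clinear2_cscale2: "clinear2 L \<Longrightarrow> L (cscale2 c v) = cscale2 c (L v)"
  unfolding clinear2_def by blast

lemma holo2_clinear2: "clinear2 L \<Longrightarrow> holo2 L U"
  unfolding holo2_def clinear2_def
  by (auto intro!: exI[of _ L] bounded_linear_imp_has_derivative simp flip: linear_conv_bounded_linear)

lemma holo2_derivative:
  assumes "holo2 G U" "z \<in> U"
  obtains D where "(G has_derivative D) (at z)" "clinear2 D"
  using assms unfolding holo2_def clinear2_def
  by (metis has_derivative_linear)

lemma holo2_comp:
  assumes "holo2 f U" "holo2 g V" "f ` U \<subseteq> V"
  shows "holo2 (g \<circ> f) U"
  unfolding holo2_def
proof
  fix z assume z: "z \<in> U"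
  obtain D1 where D1: "(f has_derivative D1) (at z)" "\<forall>c v. D1 (cscale2 c v) = cscale2 c (D1 v)"
    using assms(1) z unfolding holo2_def by blast
  obtain D2 where D2: "(g has_derivative D2) (at (f z))" "\<forall>c v. D2 (cscale2 c v) = cscale2 c (D2 v)"
    using assms(2,3) z unfolding holo2_def by blast
  show "\<exists>D. ((g \<circ> f) has_derivative D) (at z) \<and> (\<forall>c v. D (cscale2 c v) = cscale2 c (D v))"
    using diff_chain_at[OF D1(1) D2(1)] D1(2) D2(2)
    by (intro exI[of _ "D2 \<circ> D1"]) (simp del: split_paired_All)
qed

lemma holo2_cong:
  assumes "holo2 f U" "open U" "\<And>x. x \<in> U \<Longrightarrow> g x = f x"
  shows "holo2 g U"
  using assms has_derivative_transform_within_open unfolding holo2_def by metis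

lemma has_derivative_cscale2_line: "((\<lambda>t. cscale2 t w) has_derivative (\<lambda>h. cscale2 h w)) (at t)"
  unfolding cscale2_def by (auto intro!: derivative_eq_intros)

lemma holo_disc_has_derivative:
  assumes "holo_disc \<gamma>" "t \<in> unit_disc"
  obtains g' where "(\<gamma> has_derivative (\<lambda>h. cscale2 h g')) (at t)"
proof -
  obtain d1 d2 where "((\<lambda>t. fst (\<gamma> t)) has_field_derivative d1) (at t)"
      "((\<lambda>t. snd (\<gamma> t)) has_field_derivative d2) (at t)"
    using assms holomorphic_on_open[of unit_disc] unfolding holo_disc_def unit_disc_def by blast
  from has_derivative_Pair[OF this[unfolded has_field_derivative_def]] that[of "(d1, d2)"]
  show ?thesis by (simp add: cscale2_def mult.commute)
qed

lemma has_field_derivative_cinner_comp: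
  assumes "(\<gamma> has_derivative (\<lambda>h. cscale2 h g')) (at t)" "(G has_derivative D) (at (\<gamma> t))"
    and "clinear2 D"
  shows "((\<lambda>t. cinner (G (\<gamma> t)) e) has_field_derivative cinner (D g') e) (at t)"
proof -
  have "((\<lambda>y. cinner y e) has_derivative (\<lambda>y. cinner y e)) (at p)" for p
    unfolding cinner_def by (auto intro!: derivative_eq_intros)
  then have "((\<lambda>y. cinner y e) \<circ> (G \<circ> \<gamma>) has_derivative (\<lambda>y. cinner y e) \<circ> (D \<circ> (\<lambda>h. cscale2 h g'))) (at t)"
    by (intro diff_chain_at assms)
  moreover have "(\<lambda>y. cinner y e) \<circ> (D \<circ> (\<lambda>h. cscale2 h g')) = (*) (cinner (D g') e)"
    by (auto simp: clinear2_cscale2[OF assms(3)] cinner_cscale2_left)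
  ultimately show ?thesis
    by (simp add: has_field_derivative_def o_def)
qed

lemma holo_disc_cinner: "holo_disc \<gamma> \<Longrightarrow> (\<lambda>t. cinner (\<gamma> t) e) holomorphic_on unit_disc"
  unfolding holo_disc_def cinner_def by (auto intro!: holomorphic_intros)

lemma holo_disc_comp:
  assumes "holo_disc \<gamma>" "\<gamma> ` unit_disc \<subseteq> U" "holo2 G U"
  shows "holo_disc (G \<circ> \<gamma>)"
proof -
  have "(\<lambda>t. cinner (G (\<gamma> t)) e) holomorphic_on unit_disc" for e
    unfolding unit_disc_def holomorphic_on_open[OF open_ball]
  proof
    fix t :: complex assume "t \<in> ball 0 1"
    then have t: "t \<in> unit_disc" by (simp add: unit_disc_def)
    obtain g' where "(\<gamma> has_derivative (\<lambda>h. cscale2 h g')) (at t)"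
      using holo_disc_has_derivative[OF assms(1) t] .
    moreover obtain D where "(G has_derivative D) (at (\<gamma> t))" "clinear2 D"
      using holo2_derivative[OF assms(3)] assms(2) t by blast
    ultimately show "\<exists>f'. ((\<lambda>t. cinner (G (\<gamma> t)) e) has_field_derivative f') (at t)"
      using has_field_derivative_cinner_comp by blast
  qed
  from this[of "(1, 0)"] this[of "(0, 1)"] show ?thesis
    by (simp add: holo_disc_def cinner_def)
qed

lemma holo_disc_line: "holo_disc (\<lambda>t. cscale2 t w)"
  unfolding holo_disc_def cscale2_def by (auto intro!: holomorphic_intros)

lemma line_subset_B2:
  assumes "norm w \<le> 1"
  shows "(\<lambda>t. cscale2 t w) ` unit_disc \<subseteq> B2"
proof
  fix x assume "x \<in> (\<lambda>t. cscale2 t w) ` unit_disc"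
  then obtain t where t: "cmod t < 1" "x = cscale2 t w"
    by (auto simp: mem_unit_disc)
  have "cmod t * norm w \<le> cmod t"
    using assms by (simp add: mult_left_le)
  with t show "x \<in> B2"
    by (simp add: mem_B2 norm_cscale2)
qed

section \<open>Hyperbolic distance and the Kobayashi distance\<close>

lemma artanh_real_strict_mono:
  fixes x y :: real
  assumes "-1 < x" "x < y" "y < 1"
  shows "artanh x < artanh y"
proof -
  have "(1 + x) / (1 - x) < (1 + y) / (1 - y)"
    using assms by (simp add: field_simps)
  moreover have "0 < (1 + x) / (1 - x)"
    using assms by simp
  ultimately show ?thesis
    by (simp add: artanh_def)
qed

lemma hyp_dist_Moebius: "hyp_dist a b = artanh (cmod (Moebius_function 0 a b))"
  by (simp add: hyp_dist_def Moebius_function_simple norm_divide norm_minus_commute)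

lemma hyp_dist_nonneg:
  assumes "a \<in> unit_disc" "b \<in> unit_disc"
  shows "0 \<le> hyp_dist a b"
proof -
  have "cmod (Moebius_function 0 a b) < 1"
    using assms by (intro Moebius_function_norm_lt_1) (auto simp: mem_unit_disc)
  then show ?thesis
    unfolding hyp_dist_Moebius
    using artanh_real_strict_mono[of 0 "cmod (Moebius_function 0 a b)"] by fastforce
qed

lemma kobayashi_dist_le_hyp_dist:
  assumes "holo_disc f" "f ` unit_disc \<subseteq> \<Omega>" "a \<in> unit_disc" "b \<in> unit_disc"
  shows "kobayashi_dist \<Omega> (f a) (f b) \<le> hyp_dist a b"
  unfolding kobayashi_dist_def
proof (rule cInf_lower, goal_cases chain bounded)
  case chain
  show ?case
    by (intro CollectI exI[of _ "1::nat"] exI[of _ "\<lambda>j. if j = 0 then f a else f b"]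
        exI[of _ "\<lambda>_. a"] exI[of _ "\<lambda>_. b"] exI[of _ "\<lambda>_. f"]) (use assms in auto)
next
  case bounded
  show ?case
    by (rule bdd_belowI[of _ 0]) (auto intro!: sum_nonneg hyp_dist_nonneg)
qed

section \<open>Automorphisms of the ball\<close>

lemma automorphism_B2I:
  assumes "holo2 F B2" "holo2 G B2" "F ` B2 \<subseteq> B2" "G ` B2 \<subseteq> B2"
    and "\<And>x. x \<in> B2 \<Longrightarrow> G (F x) = x" "\<And>y. y \<in> B2 \<Longrightarrow> F (G y) = y"
  shows "automorphism_B2 F"
proof -
  have bij: "bij_betw F B2 B2"
    by (rule bij_betw_byWitness[where f' = G]) (use assms in auto)
  have "inv_into B2 F y = G y" if "y \<in> B2" for y
    using assms that by (intro inv_into_f_eq[OF bij_betw_imp_inj_on[OF bij]]) auto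
  then show ?thesis
    unfolding automorphism_B2_def using assms(1) bij holo2_cong[OF assms(2) open_B2] by blast
qed

lemma automorphism_B2_image: "automorphism_B2 T \<Longrightarrow> T ` B2 = B2"
  by (simp add: automorphism_B2_def bij_betw_def)

lemma automorphism_B2_mem: "automorphism_B2 T \<Longrightarrow> x \<in> B2 \<Longrightarrow> T x \<in> B2"
  by (auto simp: automorphism_B2_def bij_betw_def)

lemma automorphism_B2_inv_into_left: "automorphism_B2 T \<Longrightarrow> x \<in> B2 \<Longrightarrow> inv_into B2 T (T x) = x"
  by (simp add: automorphism_B2_def bij_betw_def)

lemma automorphism_B2_inv_into_right: "automorphism_B2 T \<Longrightarrow> y \<in> B2 \<Longrightarrow> T (inv_into B2 T y) = y"
  by (simp add: automorphism_B2_def bij_betw_def f_inv_into_f)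

lemma automorphism_B2_inv_into: "automorphism_B2 T \<Longrightarrow> automorphism_B2 (inv_into B2 T)"
  by (rule automorphism_B2I[where G = T])
    (auto simp: automorphism_B2_def bij_betw_def inv_into_into f_inv_into_f)

lemma automorphism_B2_comp:
  assumes "automorphism_B2 F" "automorphism_B2 G"
  shows "automorphism_B2 (G \<circ> F)"
proof (rule automorphism_B2I[where G = "inv_into B2 F \<circ> inv_into B2 G"])
  have FG: "F ` B2 = B2" "G ` B2 = B2" "inv_into B2 F ` B2 = B2" "inv_into B2 G ` B2 = B2"
    using assms automorphism_B2_inv_into automorphism_B2_image by blast+
  show "holo2 (G \<circ> F) B2" "holo2 (inv_into B2 F \<circ> inv_into B2 G) B2"
    using assms automorphism_B2_inv_into FG by (auto intro!: holo2_comp simp: automorphism_B2_def)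
  show "(G \<circ> F) ` B2 \<subseteq> B2" "(inv_into B2 F \<circ> inv_into B2 G) ` B2 \<subseteq> B2"
    by (simp_all only: image_comp[symmetric] FG order_refl)
  show "(inv_into B2 F \<circ> inv_into B2 G) ((G \<circ> F) x) = x" if "x \<in> B2" for x
  proof -
    have "F x \<in> B2"
      using FG that by blast
    then show ?thesis
      using assms that by (simp add: automorphism_B2_inv_into_left)
  qed
  show "(G \<circ> F) ((inv_into B2 F \<circ> inv_into B2 G) y) = y" if "y \<in> B2" for y
  proof -
    have "inv_into B2 G y \<in> B2"
      using FG that by blast
    then show ?thesis
      using assms that by (simp add: automorphism_B2_inv_into_right)
  qed
qed

lemma automorphism_B2_cong:
  assumes F: "automorphism_B2 F" and eq: "\<And>x. x \<in> B2 \<Longrightarrow> G x = F x"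
  shows "automorphism_B2 G"
proof (rule automorphism_B2I[where G = "inv_into B2 F"])
  have "F ` B2 = B2" "inv_into B2 F ` B2 = B2"
    using F automorphism_B2_inv_into automorphism_B2_image by blast+
  then show "holo2 G B2" "holo2 (inv_into B2 F) B2" "G ` B2 \<subseteq> B2" "inv_into B2 F ` B2 \<subseteq> B2"
    using F eq automorphism_B2_inv_into holo2_cong[OF _ open_B2, of F G]
    by (auto simp: automorphism_B2_def)
  show "inv_into B2 F (G x) = x" if "x \<in> B2" for x
    using F eq that by (simp add: automorphism_B2_inv_into_left)
  show "G (inv_into B2 F y) = y" if "y \<in> B2" for y
  proof -
    have "inv_into B2 F y \<in> B2"
      using \<open>inv_into B2 F ` B2 = B2\<close> that by blast
    then show ?thesis
      using F eq that by (simp add: automorphism_B2_inv_into_right)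
  qed
qed

lemma automorphism_B2_clinear2_isometry:
  assumes L: "clinear2 L" and iso: "\<And>x. norm (L x) = norm x"
  shows "automorphism_B2 L"
proof -
  have lin: "linear L"
    using L by (rule clinear2_linear)
  then have "inj L"
    unfolding linear_injective_0[OF lin] by (metis iso norm_eq_zero)
  then obtain L' where L': "linear L'" "\<And>x. L' (L x) = x" "\<And>x. L (L' x) = x"
    using linear_injective_isomorphism[OF lin] by blast
  have "L' (cscale2 c v) = L' (L (cscale2 c (L' v)))" for c v
    using L'(3) by (simp add: clinear2_cscale2[OF L])
  then have "clinear2 L'"
    using L'(1,2) by (simp add: clinear2_def)
  moreover have "norm (L' y) = norm y" for y
    using iso[of "L' y"] L'(3) by simp
  ultimately show ?thesis
    using L L' iso by (intro automorphism_B2I[where G = L'] holo2_clinear2) (auto simp: mem_B2)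
qed

definition rotation2 :: "complex \<Rightarrow> complex \<Rightarrow> complex \<times> complex \<Rightarrow> complex \<times> complex" where
  "rotation2 \<alpha> \<beta> x = (\<alpha> * fst x + \<beta> * snd x, - cnj \<beta> * fst x + cnj \<alpha> * snd x)"

lemma clinear2_rotation2: "clinear2 (rotation2 \<alpha> \<beta>)"
  unfolding clinear2_def
  by (auto intro!: linearI simp: rotation2_def cscale2_def algebra_simps scaleR_conv_of_real)

lemma norm_rotation2:
  assumes "(cmod \<alpha>)\<^sup>2 + (cmod \<beta>)\<^sup>2 = 1"
  shows "norm (rotation2 \<alpha> \<beta> x) = norm x"
proof -
  have "\<alpha> * cnj \<alpha> + \<beta> * cnj \<beta> = 1"
    using assms by (metis complex_norm_square of_real_1 of_real_add)
  moreover have "cinner (rotation2 \<alpha> \<beta> x) (rotation2 \<alpha> \<beta> x) = (\<alpha> * cnj \<alpha> + \<beta> * cnj \<beta>) * cinner x x"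
    by (simp add: cinner_def rotation2_def algebra_simps)
  ultimately show ?thesis
    by (simp add: norm_eq_iff_cinner_self)
qed

lemma rotation2_to_axis:
  obtains \<alpha> \<beta> where "(cmod \<alpha>)\<^sup>2 + (cmod \<beta>)\<^sup>2 = 1" "rotation2 \<alpha> \<beta> a = (complex_of_real (norm a), 0)"
proof (cases "a = 0")
  case True
  then show ?thesis
    using that[of 1 0] by (simp add: rotation2_def)
next
  case False
  define r where "r = norm a"
  have r: "r > 0"
    using False by (simp add: r_def)
  have "(cmod (fst a))\<^sup>2 + (cmod (snd a))\<^sup>2 = r\<^sup>2"
    by (cases a) (simp add: r_def norm_Pair)
  moreover have "fst a * cnj (fst a) + snd a * cnj (snd a) = (complex_of_real r)\<^sup>2"
    using cinner_self[of a] by (simp add: cinner_def r_def)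
  ultimately show ?thesis
    using r that[of "cnj (fst a) / complex_of_real r" "cnj (snd a) / complex_of_real r"]
    by (simp add: rotation2_def norm_divide power_divide add_divide_distrib[symmetric]
        mult.commute power2_eq_square r_def)
qed

text \<open>Up to sign, Rudin's involution \<phi>_a of the ball for a = (r, 0): a disc automorphism in the
  first variable, with the second variable rescaled so that the ball is preserved.\<close>

definition mobius2 :: "real \<Rightarrow> complex \<times> complex \<Rightarrow> complex \<times> complex" where
  "mobius2 r x = ((fst x - complex_of_real r) / (1 - complex_of_real r * fst x),
     complex_of_real (sqrt (1 - r\<^sup>2)) * snd x / (1 - complex_of_real r * fst x))"

lemma mobius2_denominator_nonzero:
  assumes "\<bar>r\<bar> < 1" "x \<in> B2"
  shows "1 - complex_of_real r * fst x \<noteq> 0"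
proof -
  have "cmod (fst x) < 1"
    using assms(2) by (cases x) (auto simp: mem_B2 intro: le_less_trans[OF norm_fst_le])
  then have "cmod (complex_of_real r * fst x) < 1"
    using assms(1) mult_left_le[of "cmod (fst x)" "\<bar>r\<bar>"] by (simp add: norm_mult)
  then show ?thesis
    by auto
qed

lemma mobius2_B2:
  assumes r: "\<bar>r\<bar> < 1" and x: "x \<in> B2"
  shows "mobius2 r x \<in> B2"
proof -
  define d where "d = 1 - complex_of_real r * fst x"
  have d: "d \<noteq> 0"
    unfolding d_def using r x by (rule mobius2_denominator_nonzero)
  have r2: "0 < 1 - r\<^sup>2" and x2: "0 < 1 - (norm x)\<^sup>2"
    using r x by (simp_all add: mem_B2 abs_square_less_1)
  have "(norm (mobius2 r x))\<^sup>2 = ((cmod (fst x - r))\<^sup>2 + (1 - r\<^sup>2) * (cmod (snd x))\<^sup>2) / (cmod d)\<^sup>2"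
    using r2 by (cases x) (simp add: mobius2_def d_def norm_Pair norm_divide norm_mult power_divide
        power_mult_distrib add_divide_distrib)
  also have "(cmod (fst x - r))\<^sup>2 + (1 - r\<^sup>2) * (cmod (snd x))\<^sup>2 = (cmod d)\<^sup>2 - (1 - r\<^sup>2) * (1 - (norm x)\<^sup>2)"
  proof -
    have "(cmod d)\<^sup>2 - (cmod (fst x - r))\<^sup>2 = (1 - r\<^sup>2) * (1 - (cmod (fst x))\<^sup>2)"
      unfolding d_def cmod_power2 by (simp add: algebra_simps power2_eq_square)
    moreover have "(norm x)\<^sup>2 = (cmod (fst x))\<^sup>2 + (cmod (snd x))\<^sup>2"
      by (cases x) (simp add: norm_Pair)
    ultimately show ?thesis
      by (simp add: algebra_simps)
  qed
  finally have "(norm (mobius2 r x))\<^sup>2 < 1"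
    using d r2 x2 by (simp add: divide_less_eq_1)
  then show ?thesis
    by (simp add: mem_B2 power2_less_1_iff abs_square_less_1)
qed

lemma mobius2_inverse:
  assumes r: "\<bar>r\<bar> < 1" and x: "x \<in> B2"
  shows "mobius2 (-r) (mobius2 r x) = x"
proof -
  define d where "d = 1 - complex_of_real r * fst x"
  define s where "s = complex_of_real (sqrt (1 - r\<^sup>2))"
  have d: "d \<noteq> 0"
    unfolding d_def using r x by (rule mobius2_denominator_nonzero)
  have "r * r < 1"
    using r by (metis abs_square_less_1 power2_eq_square)
  then have r2: "1 - complex_of_real r * complex_of_real r \<noteq> 0"
    by (metis of_real_1 of_real_eq_iff of_real_mult right_minus_eq less_irrefl)
  have s: "s * s = 1 - complex_of_real r * complex_of_real r"
    using r by (simp add: s_def abs_square_le_1 less_imp_le flip: of_real_mult) (simp add: power2_eq_square)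
  define y1 where "y1 = (fst x - complex_of_real r) / d"
  have den: "1 + complex_of_real r * y1 = (1 - complex_of_real r * complex_of_real r) / d"
    using d by (simp add: y1_def d_def field_simps)
  have "y1 + complex_of_real r = fst x * (1 - complex_of_real r * complex_of_real r) / d"
    using d by (simp add: y1_def d_def field_simps)
  then have "(y1 + complex_of_real r) / (1 + complex_of_real r * y1) = fst x"
    unfolding den using d r2 by simp
  moreover have "s * (s * snd x / d) / (1 + complex_of_real r * y1) = snd x"
  proof -
    have "s * (s * snd x / d) = (1 - complex_of_real r * complex_of_real r) * snd x / d"
      using s by (simp add: mult.assoc[symmetric])
    then show ?thesis
      unfolding den using d r2 by (simp only:) simp
  qed
  ultimately show ?thesis
    by (simp add: mobius2_def prod_eq_iff y1_def d_def s_def)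
qed

lemma holo2_mobius2:
  assumes "\<bar>r\<bar> < 1"
  shows "holo2 (mobius2 r) B2"
  unfolding holo2_def
proof
  fix z assume "z \<in> B2"
  then have "1 - complex_of_real r * fst z \<noteq> 0"
    using assms mobius2_denominator_nonzero by blast
  then show "\<exists>D. (mobius2 r has_derivative D) (at z) \<and> (\<forall>c v. D (cscale2 c v) = cscale2 c (D v))"
    unfolding mobius2_def[abs_def]
    apply (intro exI conjI)
     apply (rule derivative_eq_intros refl | assumption)+
    apply (auto simp: cscale2_def field_simps)
    done
qed

lemma automorphism_B2_mobius2:
  assumes "\<bar>r\<bar> < 1"
  shows "automorphism_B2 (mobius2 r)"
proof (rule automorphism_B2I[where G = "mobius2 (-r)"])
  have "\<bar>-r\<bar> < 1"
    using assms by simp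
  then show "holo2 (mobius2 r) B2" "holo2 (mobius2 (-r)) B2"
    "mobius2 r ` B2 \<subseteq> B2" "mobius2 (-r) ` B2 \<subseteq> B2"
    "\<And>x. x \<in> B2 \<Longrightarrow> mobius2 (-r) (mobius2 r x) = x"
    "\<And>y. y \<in> B2 \<Longrightarrow> mobius2 r (mobius2 (-r) y) = y"
    using assms holo2_mobius2 mobius2_B2 mobius2_inverse[of "-r"] mobius2_inverse[of r] by auto
qed

lemma automorphism_B2_transitive:
  assumes "a \<in> B2"
  obtains T where "automorphism_B2 T" "T a = 0"
proof -
  obtain \<alpha> \<beta> where ab: "(cmod \<alpha>)\<^sup>2 + (cmod \<beta>)\<^sup>2 = 1"
    "rotation2 \<alpha> \<beta> a = (complex_of_real (norm a), 0)"
    by (rule rotation2_to_axis)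
  have "automorphism_B2 (mobius2 (norm a) \<circ> rotation2 \<alpha> \<beta>)"
    using assms ab(1)
    by (intro automorphism_B2_comp automorphism_B2_clinear2_isometry automorphism_B2_mobius2
        clinear2_rotation2 norm_rotation2) (auto simp: mem_B2)
  moreover have "(mobius2 (norm a) \<circ> rotation2 \<alpha> \<beta>) a = 0"
    using ab(2) by (simp add: mobius2_def zero_prod_def)
  ultimately show ?thesis
    using that by blast
qed

section \<open>The Schwarz lemma in the ball and complex geodesics through the origin\<close>

lemma polar_decomposition2:
  obtains e where "norm e = 1" "x = cscale2 (complex_of_real (norm x)) e"
proof (cases "x = 0")
  case True
  then show ?thesis
    using that[of "(1, 0)"] by simp
next
  case False
  then show ?thesis
    using that[of "cscale2 (1 / complex_of_real (norm x)) x"]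
    by (simp add: norm_cscale2 norm_divide cscale2_assoc)
qed

lemma cinner_polar: "norm e = 1 \<Longrightarrow> cinner (cscale2 (complex_of_real r) e) e = complex_of_real r"
  by (simp add: cinner_cscale2_left cinner_self)

lemma norm_cinner_lt_1: "x \<in> B2 \<Longrightarrow> norm e \<le> 1 \<Longrightarrow> cmod (cinner x e) < 1"
  using cinner_Cauchy_Schwarz[of x e] mult_left_le[of "norm e" "norm x"]
  by (simp add: mem_B2)

lemma holo_disc_cinner_B2:
  assumes "holo_disc f" "f ` unit_disc \<subseteq> B2" "norm e \<le> 1"
  shows "(\<lambda>t. cinner (f t) e) holomorphic_on ball 0 1"
    and "\<And>t. cmod t < 1 \<Longrightarrow> cmod (cinner (f t) e) < 1"
proof -
  show "(\<lambda>t. cinner (f t) e) holomorphic_on ball 0 1"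
    using holo_disc_cinner[OF assms(1)] by (simp add: unit_disc_def)
  fix t :: complex assume "cmod t < 1"
  then have "f t \<in> B2"
    using assms(2) by (auto simp: mem_unit_disc)
  then show "cmod (cinner (f t) e) < 1"
    using assms(3) by (rule norm_cinner_lt_1)
qed

lemma holo_disc_comp_disc:
  assumes "holo_disc \<psi>" "h holomorphic_on unit_disc" "h ` unit_disc \<subseteq> unit_disc"
  shows "holo_disc (\<psi> \<circ> h)"
  using assms holomorphic_on_compose_gen[OF assms(2) _ assms(3)]
  unfolding holo_disc_def o_def by blast

lemma Schwarz_Lemma_B2:
  assumes f: "holo_disc f" "f ` unit_disc \<subseteq> B2" "f 0 = 0" and \<zeta>: "\<zeta> \<in> unit_disc"
  shows "norm (f \<zeta>) \<le> cmod \<zeta>"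
proof -
  obtain e where e: "norm e = 1" "f \<zeta> = cscale2 (complex_of_real (norm (f \<zeta>))) e"
    by (rule polar_decomposition2)
  have "cinner (f 0) e = 0"
    by (simp add: f(3) cinner_def)
  then have "cmod (cinner (f \<zeta>) e) \<le> cmod \<zeta>"
    using holo_disc_cinner_B2[OF f(1,2)] e(1) \<zeta>
    by (intro Schwarz_Lemma(1)) (simp_all add: mem_unit_disc)
  then show ?thesis
    using e by (metis cinner_polar norm_ge_zero norm_of_real abs_of_nonneg)
qed

lemma Schwarz_Lemma_B2_equality:
  assumes f: "holo_disc f" "f ` unit_disc \<subseteq> B2" "f 0 = 0"
    and \<zeta>\<^sub>0: "\<zeta>\<^sub>0 \<in> unit_disc" "\<zeta>\<^sub>0 \<noteq> 0" "norm (f \<zeta>\<^sub>0) = cmod \<zeta>\<^sub>0"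
  obtains v where "norm v = 1" "\<And>\<zeta>. \<zeta> \<in> unit_disc \<Longrightarrow> f \<zeta> = cscale2 \<zeta> v"
proof -
  obtain e where e: "norm e = 1" "f \<zeta>\<^sub>0 = cscale2 (complex_of_real (norm (f \<zeta>\<^sub>0))) e"
    by (rule polar_decomposition2)
  define g where "g t = cinner (f t) e" for t
  have "cmod (g \<zeta>\<^sub>0) = cmod \<zeta>\<^sub>0"
    unfolding g_def using e \<zeta>\<^sub>0(3) by (metis cinner_polar norm_ge_zero norm_of_real abs_of_nonneg)
  moreover have "g 0 = 0"
    by (simp add: g_def f(3) cinner_def)
  ultimately obtain \<alpha> where \<alpha>: "\<And>z. cmod z < 1 \<Longrightarrow> g z = \<alpha> * z" "cmod \<alpha> = 1"
    using holo_disc_cinner_B2[OF f(1,2), of e] e(1) \<zeta>\<^sub>0 Schwarz_Lemma(3)[of g 0]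
    unfolding g_def by (auto simp: mem_unit_disc)
  show ?thesis
  proof (rule that[of "cscale2 \<alpha> e"])
    show "norm (cscale2 \<alpha> e) = 1"
      by (simp add: norm_cscale2 e(1) \<alpha>(2))
    fix \<zeta> assume \<zeta>: "\<zeta> \<in> unit_disc"
    have c: "cinner (f \<zeta>) e = \<alpha> * \<zeta>"
      using \<alpha>(1) \<zeta> by (simp add: g_def mem_unit_disc)
    have "(norm (f \<zeta> - cscale2 (cinner (f \<zeta>) e) e))\<^sup>2 \<le> 0"
      using norm_diff_projection_squared[OF e(1), of "f \<zeta>"] Schwarz_Lemma_B2[OF f \<zeta>] c \<alpha>(2)
      by (simp add: norm_mult power_mono)
    then show "f \<zeta> = cscale2 \<zeta> (cscale2 \<alpha> e)"
      using c by (simp add: cscale2_assoc mult.commute)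
  qed
qed

lemma kobayashi_dist_B2_le_artanh:
  assumes T: "automorphism_B2 T" and c: "c \<in> B2" "T c = 0" and p: "p \<in> B2"
  shows "kobayashi_dist B2 c p \<le> artanh (norm (T p))"
proof -
  obtain e where e: "norm e = 1" "T p = cscale2 (complex_of_real (norm (T p))) e"
    by (rule polar_decomposition2)
  define f where "f = inv_into B2 T \<circ> (\<lambda>t. cscale2 t e)"
  have S: "automorphism_B2 (inv_into B2 T)"
    using T by (rule automorphism_B2_inv_into)
  have line: "(\<lambda>t. cscale2 t e) ` unit_disc \<subseteq> B2"
    using e(1) by (simp add: line_subset_B2)
  have f: "holo_disc f" "f ` unit_disc \<subseteq> B2"
    using holo_disc_comp[OF holo_disc_line line] S line automorphism_B2_mem[OF S]
    by (simp_all add: f_def automorphism_B2_def image_subset_iff)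
  have "T p \<in> B2"
    using T p by (rule automorphism_B2_mem)
  then have "complex_of_real (norm (T p)) \<in> unit_disc"
    by (simp add: mem_B2 mem_unit_disc)
  then have "kobayashi_dist B2 (f 0) (f (complex_of_real (norm (T p)))) \<le> hyp_dist 0 (norm (T p))"
    using f by (intro kobayashi_dist_le_hyp_dist) (auto simp: mem_unit_disc)
  moreover have "f 0 = c" "f (complex_of_real (norm (T p))) = p"
    using T c p e(2) by (simp_all add: f_def automorphism_B2_inv_into_left flip: c(2))
  ultimately show ?thesis
    by (simp add: hyp_dist_def)
qed

lemma Moebius_function_image_unit_disc:
  assumes "cmod s < 1"
  shows "Moebius_function 0 s ` unit_disc = unit_disc"
proof
  show "Moebius_function 0 s ` unit_disc \<subseteq> unit_disc"
    using Moebius_function_norm_lt_1[OF assms] by (auto simp: mem_unit_disc)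
  show "unit_disc \<subseteq> Moebius_function 0 s ` unit_disc"
  proof
    fix \<zeta> assume "\<zeta> \<in> unit_disc"
    then have "\<zeta> = Moebius_function 0 s (Moebius_function 0 (-s) \<zeta>)"
      "Moebius_function 0 (-s) \<zeta> \<in> unit_disc"
      using assms Moebius_function_compose[of s "-s" \<zeta>] Moebius_function_norm_lt_1[of "-s" \<zeta> 0]
      by (simp_all add: mem_unit_disc)
    then show "\<zeta> \<in> Moebius_function 0 s ` unit_disc"
      by blast
  qed
qed

lemma complex_geodesic_lower_bound:
  assumes geo: "complex_geodesic \<psi>" and s: "s \<in> unit_disc" and b: "b \<in> unit_disc"
    and T: "automorphism_B2 T" "T (\<psi> s) = 0"
  shows "cmod (Moebius_function 0 s b) \<le> norm (T (\<psi> b))"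
proof (rule ccontr)
  assume "\<not> ?thesis"
  moreover have "-1 < norm (T (\<psi> b))"
    by (rule less_le_trans[OF _ norm_ge_zero]) simp
  ultimately have "artanh (norm (T (\<psi> b))) < artanh (cmod (Moebius_function 0 s b))"
    using Moebius_function_norm_lt_1[of s b 0] s b
    by (intro artanh_real_strict_mono) (simp_all add: mem_unit_disc)
  also have "\<dots> = kobayashi_dist B2 (\<psi> s) (\<psi> b)"
    using geo s b by (simp add: complex_geodesic_def hyp_dist_Moebius)
  also have "\<dots> \<le> artanh (norm (T (\<psi> b)))"
    using geo s b by (intro kobayashi_dist_B2_le_artanh T) (auto simp: complex_geodesic_def)
  finally show False
    by simp
qed

text \<open>The lower bound at one point forces equality in the Schwarz lemma for the
  normalised disc, which is therefore linear.\<close>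

lemma complex_geodesic_normal_form:
  assumes geo: "complex_geodesic \<psi>" and s: "s \<in> unit_disc"
    and T: "automorphism_B2 T" "T (\<psi> s) = 0"
  obtains v where "norm v = 1" "\<And>\<zeta>. \<zeta> \<in> unit_disc \<Longrightarrow> T (\<psi> (Moebius_function 0 (-s) \<zeta>)) = cscale2 \<zeta> v"
    and "(\<lambda>\<zeta>. cscale2 \<zeta> v) ` unit_disc = T ` \<psi> ` unit_disc"
proof -
  let ?m = "Moebius_function 0 (-s)"
  have s1: "cmod s < 1"
    using s by (simp add: mem_unit_disc)
  have m: "?m holomorphic_on unit_disc" "?m ` unit_disc = unit_disc"
    using Moebius_function_holomorphic[of "-s" 0] Moebius_function_image_unit_disc[of "-s"] s1
    by (simp_all add: unit_disc_def)
  have \<psi>: "holo_disc \<psi>" "\<psi> ` unit_disc \<subseteq> B2"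
    using geo by (simp_all add: complex_geodesic_def)
  define f where "f = T \<circ> (\<psi> \<circ> ?m)"
  have img: "f ` unit_disc = T ` \<psi> ` unit_disc"
    unfolding f_def image_comp[symmetric] m(2) ..
  have "(\<psi> \<circ> ?m) ` unit_disc \<subseteq> B2"
    unfolding image_comp[symmetric] m(2) by (rule \<psi>(2))
  then have hol: "holo_disc f"
    unfolding f_def using \<psi>(1) m T(1)
    by (intro holo_disc_comp[of _ B2] holo_disc_comp_disc) (simp_all add: automorphism_B2_def)
  have "f ` unit_disc \<subseteq> B2"
    unfolding img using image_mono[OF \<psi>(2), of T] automorphism_B2_image[OF T(1)] by simp
  moreover have "f 0 = 0"
    using T(2) by (simp add: f_def Moebius_function_of_zero)
  ultimately have f: "holo_disc f" "f ` unit_disc \<subseteq> B2" "f 0 = 0"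
    using hol by blast+
  have half: "(1/2 :: complex) \<in> unit_disc"
    by (simp add: mem_unit_disc)
  then have "?m (1/2) \<in> unit_disc"
    using m(2) by blast
  then have "cmod (Moebius_function 0 s (?m (1/2))) \<le> norm (f (1/2))"
    using complex_geodesic_lower_bound[OF geo s _ T] by (simp add: f_def)
  moreover have "Moebius_function 0 s (?m (1/2)) = 1/2"
    using s1 by (intro Moebius_function_compose) simp_all
  ultimately have "cmod (1/2) \<le> norm (f (1/2))"
    by simp
  then have "norm (f (1/2)) = cmod (1/2)"
    using Schwarz_Lemma_B2[OF f(1-3) half] by simp
  then obtain v where v: "norm v = 1" "\<And>\<zeta>. \<zeta> \<in> unit_disc \<Longrightarrow> f \<zeta> = cscale2 \<zeta> v"
    using Schwarz_Lemma_B2_equality[OF f(1-3) half] by auto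
  show ?thesis
  proof (rule that[OF v(1)])
    show "T (\<psi> (?m \<zeta>)) = cscale2 \<zeta> v" if "\<zeta> \<in> unit_disc" for \<zeta>
      using v(2)[OF that] by (simp add: f_def)
    have "(\<lambda>\<zeta>. cscale2 \<zeta> v) ` unit_disc = f ` unit_disc"
      using v(2) by simp
    with img show "(\<lambda>\<zeta>. cscale2 \<zeta> v) ` unit_disc = T ` \<psi> ` unit_disc"
      by simp
  qed
qed

section \<open>Rigidity of holomorphic self-maps fixing the origin\<close>

lemma derivative_eq_on_line:
  assumes "(G has_derivative D) (at 0)" "\<And>t. t \<in> unit_disc \<Longrightarrow> G (cscale2 t v) = cscale2 t u"
  shows "D v = u"
proof -
  have "(G \<circ> (\<lambda>t. cscale2 t v) has_derivative D \<circ> (\<lambda>h. cscale2 h v)) (at 0)"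
    using diff_chain_at[OF has_derivative_cscale2_line[of v 0]] assms(1) by simp
  moreover have "(G \<circ> (\<lambda>t. cscale2 t v) has_derivative (\<lambda>h. cscale2 h u)) (at 0)"
    by (rule has_derivative_transform_within_open[OF has_derivative_cscale2_line[of u 0] open_ball[of 0 1]])
      (use assms(2) in \<open>auto simp: unit_disc_def\<close>)
  ultimately have "D \<circ> (\<lambda>h. cscale2 h v) = (\<lambda>h. cscale2 h u)"
    using has_derivative_unique by blast
  from fun_cong[OF this, of 1] show ?thesis
    by simp
qed

lemma has_field_derivative_cinner_slice:
  assumes "(G has_derivative D) (at 0)" "clinear2 D"
  shows "((\<lambda>t. cinner (G (cscale2 t w)) e) has_field_derivative cinner (D w) e) (at 0)"
  using assms has_field_derivative_cinner_comp[OF has_derivative_cscale2_line, of G D 0 w e]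
  by simp

lemma holo_disc_slice:
  assumes "holo2 G B2" "G ` B2 \<subseteq> B2" "norm w \<le> 1"
  shows "holo_disc (G \<circ> (\<lambda>t. cscale2 t w))" "(G \<circ> (\<lambda>t. cscale2 t w)) ` unit_disc \<subseteq> B2"
  using holo_disc_comp[OF holo_disc_line line_subset_B2] image_mono[OF line_subset_B2, of w G] assms
  by (simp_all add: image_comp)

lemma Schwarz_derivative_B2:
  assumes G: "holo2 G B2" "G ` B2 \<subseteq> B2" "G 0 = 0" and D: "(G has_derivative D) (at 0)" "clinear2 D"
  shows "norm (D w) \<le> norm w"
proof -
  obtain w1 where w1: "norm w1 = 1" "w = cscale2 (complex_of_real (norm w)) w1"
    by (rule polar_decomposition2)
  obtain e where e: "norm e = 1" "D w1 = cscale2 (complex_of_real (norm (D w1))) e"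
    by (rule polar_decomposition2)
  define g where "g = (\<lambda>t. cinner (G (cscale2 t w1)) e)"
  have "cinner (D w1) e = norm (D w1)"
    by (metis e cinner_polar)
  then have "(g has_field_derivative norm (D w1)) (at 0)"
    using has_field_derivative_cinner_slice[OF D, of w1 e] by (simp add: g_def)
  then have "deriv g 0 = norm (D w1)"
    by (rule DERIV_imp_deriv)
  moreover have "norm (deriv g 0) \<le> 1"
    using holo_disc_cinner_B2[OF holo_disc_slice[OF G(1,2)], of w1 e] w1(1) e(1) G(3)
    by (intro Schwarz_Lemma(2)[of g 0]) (simp_all add: g_def cinner_def)
  ultimately have "norm (D w1) \<le> 1"
    by simp
  moreover have "D w = cscale2 (complex_of_real (norm w)) (D w1)"
    using arg_cong[OF w1(2), of D] by (simp add: clinear2_cscale2[OF D(2)])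
  ultimately show ?thesis
    by (simp add: norm_cscale2 mult_left_le)
qed

lemma eq_0_if_linear_le_quadratic:
  fixes d K :: real
  assumes "\<And>t. 2 * t * d \<le> t\<^sup>2 * K"
  shows "d = 0"
proof (rule ccontr)
  assume "d \<noteq> 0"
  define t where "t = d / (\<bar>K\<bar> + 1)"
  have td: "t * d > 0"
    using \<open>d \<noteq> 0\<close> by (simp add: t_def add_pos_nonneg zero_less_mult_iff flip: power2_eq_square)
  have "t\<^sup>2 * K \<le> t\<^sup>2 * \<bar>K\<bar>"
    by (simp add: mult_left_mono)
  also have "\<dots> = t * d * (\<bar>K\<bar> / (\<bar>K\<bar> + 1))"
    by (simp add: t_def power2_eq_square)
  also have "\<dots> < t * d * 1"
    using td by (intro mult_strict_left_mono) simp_all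
  finally show False
    using assms[of t] td by linarith
qed

lemma clinear2_contraction_cinner:
  assumes L: "clinear2 L" "\<And>x. norm (L x) \<le> norm x" and y: "norm (L y) = norm y"
  shows "cinner (L y) (L w) = cinner y w"
proof -
  have re: "Re (cinner (L y') (L w)) = Re (cinner y' w)" if y': "norm (L y') = norm y'" for y'
  proof -
    have "2 * t * (Re (cinner (L y') (L w)) - Re (cinner y' w)) \<le> t\<^sup>2 * ((norm w)\<^sup>2 - (norm (L w))\<^sup>2)" for t
    proof -
      have "L (y' + cscale2 (complex_of_real t) w) = L y' + cscale2 (complex_of_real t) (L w)"
        using L(1) by (simp add: clinear2_cscale2 linear_add clinear2_linear)
      then have "(norm (L y' + cscale2 (complex_of_real t) (L w)))\<^sup>2 \<le> (norm (y' + cscale2 (complex_of_real t) w))\<^sup>2"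
        using L(2)[of "y' + cscale2 (complex_of_real t) w"] by (simp add: power_mono)
      then show ?thesis
        unfolding norm_add_real_cscale2_squared y' by (simp add: algebra_simps)
    qed
    then show ?thesis
      using eq_0_if_linear_le_quadratic by fastforce
  qed
  have "norm (L (cscale2 \<i> y)) = norm (cscale2 \<i> y)"
    using y by (simp add: clinear2_cscale2[OF L(1)] norm_cscale2)
  from re[OF this] have "Im (cinner (L y) (L w)) = Im (cinner y w)"
    by (simp add: clinear2_cscale2[OF L(1)] cinner_cscale2_left)
  with re[OF y] show ?thesis
    by (rule complex_eqI)
qed

lemma cscale2_basis_decomposition:
  assumes "fst v * snd v' - snd v * fst v' \<noteq> 0"
  obtains a b where "x = cscale2 a v + cscale2 b v'"
proof -
  define \<delta> where "\<delta> = fst v * snd v' - snd v * fst v'"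
  define a where "a = (fst x * snd v' - snd x * fst v') / \<delta>"
  define b where "b = (fst v * snd x - snd v * fst x) / \<delta>"
  have \<delta>: "\<delta> \<noteq> 0"
    using assms by (simp add: \<delta>_def)
  have ab: "a * \<delta> = fst x * snd v' - snd x * fst v'" "b * \<delta> = fst v * snd x - snd v * fst x"
    using \<delta> by (simp_all add: a_def b_def)
  have "fst (cscale2 a v + cscale2 b v') * \<delta> = (a * \<delta>) * fst v + (b * \<delta>) * fst v'"
    "snd (cscale2 a v + cscale2 b v') * \<delta> = (a * \<delta>) * snd v + (b * \<delta>) * snd v'"
    by (simp_all add: cscale2_def algebra_simps)
  then have "fst (cscale2 a v + cscale2 b v') * \<delta> = fst x * \<delta>"
    "snd (cscale2 a v + cscale2 b v') * \<delta> = snd x * \<delta>"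
    unfolding ab by (simp_all add: \<delta>_def algebra_simps)
  then have "x = cscale2 a v + cscale2 b v'"
    using \<delta> by (simp add: prod_eq_iff)
  then show ?thesis
    by (rule that)
qed

lemma clinear2_isometry_if_isometric_on_basis:
  assumes L: "clinear2 L" "\<And>x. norm (L x) \<le> norm x"
    and v: "norm (L v) = norm v" "norm (L v') = norm v'" "fst v * snd v' - snd v * fst v' \<noteq> 0"
  shows "norm (L x) = norm x"
proof -
  obtain a b where x: "x = cscale2 a v + cscale2 b v'"
    using v(3) by (rule cscale2_basis_decomposition)
  have Lx: "L x = cscale2 a (L v) + cscale2 b (L v')"
    unfolding x using L(1) by (simp add: clinear2_cscale2 linear_add clinear2_linear)
  have "cinner (L x) (L x) = a * cinner (L v) (L x) + b * cinner (L v') (L x)"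
    by (subst (1) Lx) (simp add: cinner_add_left cinner_cscale2_left)
  also have "\<dots> = a * cinner v x + b * cinner v' x"
    using L v by (simp add: clinear2_contraction_cinner)
  also have "\<dots> = cinner x x"
    by (subst (3) x) (simp add: cinner_add_left cinner_cscale2_left)
  finally show ?thesis
    by (simp add: norm_eq_iff_cinner_self)
qed

lemma holomorphic_zero_if_norm_sq_le_one_minus:
  assumes f: "f holomorphic_on ball 0 1" and bd: "\<And>t. cmod t < 1 \<Longrightarrow> (cmod (f t))\<^sup>2 \<le> 1 - (cmod t)\<^sup>2"
    and t0: "cmod t0 < 1"
  shows "f t0 = 0"
proof -
  have "(cmod (f t0))\<^sup>2 \<le> 1 - r\<^sup>2" if r: "cmod t0 < r" "r < 1" for r
  proof -
    have r0: "0 < r"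
      using r(1) norm_ge_zero[of t0] by linarith
    have "cmod (f t0) \<le> sqrt (1 - r\<^sup>2)"
    proof (rule maximum_modulus_frontier[of f "ball 0 r"])
      show "f holomorphic_on interior (ball 0 r)"
        using holomorphic_on_subset[OF f] r by (simp add: subset_ball)
      have "cball (0::complex) r \<subseteq> ball 0 1"
        using r(2) by (simp add: cball_subset_ball_iff)
      then show "continuous_on (closure (ball 0 r)) f"
        using r0 continuous_on_subset[OF holomorphic_on_imp_continuous_on[OF f]] by simp
      show "cmod (f z) \<le> sqrt (1 - r\<^sup>2)" if "z \<in> frontier (ball 0 r)" for z
        using bd[of z] that r r0 by (simp add: real_le_rsqrt)
    qed (use r in auto)
    moreover have "0 \<le> 1 - r\<^sup>2"
      using r0 r(2) power_le_one[of r 2] by simp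
    ultimately show ?thesis
      using power_mono[of "cmod (f t0)" "sqrt (1 - r\<^sup>2)" 2] by simp
  qed
  then have "\<forall>\<^sub>F r in at_left 1. (cmod (f t0))\<^sup>2 \<le> 1 - r\<^sup>2"
    using t0 by (auto simp: eventually_at_left intro!: exI[of _ "cmod t0"])
  moreover have "((\<lambda>r. 1 - r\<^sup>2) \<longlongrightarrow> 0) (at_left (1::real))"
    by (auto intro!: tendsto_eq_intros)
  ultimately have "(cmod (f t0))\<^sup>2 \<le> 0"
    by (intro tendsto_lowerbound[of _ _ "at_left 1"]) auto
  then show ?thesis
    by simp
qed

text \<open>Cartan's argument: the component of G along D w is the identity by the equality case of the
  Schwarz lemma, so the orthogonal component h satisfies \<parallel>h s\<parallel>^2 \<le> 1 - \<bar>s\<bar>^2 and vanishes by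
  the maximum modulus principle.\<close>

lemma slice_eq_derivative:
  assumes G: "holo2 G B2" "G ` B2 \<subseteq> B2" "G 0 = 0" and D: "(G has_derivative D) (at 0)" "clinear2 D"
    and w: "norm w = 1" "norm (D w) = 1" and t: "t \<in> unit_disc"
  shows "G (cscale2 t w) = cscale2 t (D w)"
proof -
  have "norm w \<le> 1"
    using w(1) by simp
  note slice = holo_disc_slice[OF G(1,2) this]
  define g where "g = (\<lambda>s. cinner (G (cscale2 s w)) (D w))"
  have g: "g holomorphic_on ball 0 1" "\<And>s. cmod s < 1 \<Longrightarrow> cmod (g s) < 1"
    using holo_disc_cinner_B2[OF slice, of "D w"] w by (simp_all add: g_def)
  have g0: "g 0 = 0"
    by (simp add: g_def G(3) cinner_def)
  have dg: "(g has_field_derivative 1) (at 0)"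
    using has_field_derivative_cinner_slice[OF D, of w "D w"] w(2) by (simp add: g_def cinner_self)
  then obtain \<alpha> where \<alpha>: "\<And>z. cmod z < 1 \<Longrightarrow> g z = \<alpha> * z"
    using Schwarz_Lemma(3)[OF g(1) g0 g(2), of 0] DERIV_imp_deriv by fastforce
  have "((\<lambda>z. \<alpha> * z) has_field_derivative \<alpha>) (at 0)"
    by (auto intro!: derivative_eq_intros)
  then have "(g has_field_derivative \<alpha>) (at 0)"
    by (rule has_field_derivative_transform_within_open[where S = "ball 0 1"]) (simp_all add: \<alpha>)
  then have "\<alpha> = 1"
    using dg DERIV_unique by blast
  then have gs: "cinner (G (cscale2 s w)) (D w) = s" if "cmod s < 1" for s
    using \<alpha>[OF that] by (simp add: g_def)
  define h where "h s = G (cscale2 s w) - cscale2 s (D w)" for s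
  have hb: "(norm (h s))\<^sup>2 \<le> 1 - (cmod s)\<^sup>2" if s: "cmod s < 1" for s
  proof -
    have "G (cscale2 s w) \<in> B2"
      using slice(2) s by (auto simp: mem_unit_disc)
    then have "(norm (G (cscale2 s w)))\<^sup>2 \<le> 1"
      by (simp add: mem_B2 abs_square_le_1)
    then show ?thesis
      using norm_diff_projection_squared[OF w(2), of "G (cscale2 s w)"] gs[OF s] by (simp add: h_def)
  qed
  obtain e where e: "norm e = 1" "h t = cscale2 (complex_of_real (norm (h t))) e"
    by (rule polar_decomposition2)
  have "(\<lambda>s. cinner (G (cscale2 s w)) e - s * cinner (D w) e) holomorphic_on ball 0 1"
    using holo_disc_cinner_B2(1)[OF slice, of e] e(1) by (auto intro!: holomorphic_intros)
  moreover have "cinner (h s) e = cinner (G (cscale2 s w)) e - s * cinner (D w) e" for s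
    by (simp add: h_def cinner_def cscale2_def algebra_simps)
  ultimately have "(\<lambda>s. cinner (h s) e) holomorphic_on ball 0 1"
    by simp
  moreover have "(cmod (cinner (h s) e))\<^sup>2 \<le> 1 - (cmod s)\<^sup>2" if "cmod s < 1" for s
  proof -
    have "cmod (cinner (h s) e) \<le> norm (h s)"
      using cinner_Cauchy_Schwarz[of "h s" e] e(1) by simp
    then have "(cmod (cinner (h s) e))\<^sup>2 \<le> (norm (h s))\<^sup>2"
      by (rule power_mono) simp
    with hb[OF that] show ?thesis
      by linarith
  qed
  ultimately have "cinner (h t) e = 0"
    using t by (intro holomorphic_zero_if_norm_sq_le_one_minus) (simp_all add: mem_unit_disc)
  then have "h t = 0"
    using e by (metis cinner_polar of_real_eq_0_iff norm_eq_zero)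
  then show ?thesis
    by (simp add: h_def)
qed

lemma eq_derivative_on_B2:
  assumes G: "holo2 G B2" "G ` B2 \<subseteq> B2" "G 0 = 0" and D: "(G has_derivative D) (at 0)" "clinear2 D"
    and iso: "\<And>x. norm (D x) = norm x" and x: "x \<in> B2"
  shows "G x = D x"
proof -
  obtain w where w: "norm w = 1" "x = cscale2 (complex_of_real (norm x)) w"
    by (rule polar_decomposition2)
  have "complex_of_real (norm x) \<in> unit_disc"
    using x by (simp add: mem_B2 mem_unit_disc)
  then have "G (cscale2 (complex_of_real (norm x)) w) = cscale2 (complex_of_real (norm x)) (D w)"
    using w(1) iso[of w] by (intro slice_eq_derivative[OF G D]) simp_all
  then have "G x = cscale2 (complex_of_real (norm x)) (D w)"
    by (simp only: w(2)[symmetric])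
  also have "\<dots> = D x"
    using arg_cong[OF w(2), of D] by (simp add: clinear2_cscale2[OF D(2)])
  finally show ?thesis .
qed

lemma automorphism_B2_if_linear_on_two_lines:
  assumes G: "holo2 G B2" "G ` B2 \<subseteq> B2" "G 0 = 0"
    and v: "norm v = 1" "norm u = 1" "\<And>t. t \<in> unit_disc \<Longrightarrow> G (cscale2 t v) = cscale2 t u"
    and v': "norm v' = 1" "norm u' = 1" "\<And>t. t \<in> unit_disc \<Longrightarrow> G (cscale2 t v') = cscale2 t u'"
    and indep: "fst v * snd v' - snd v * fst v' \<noteq> 0"
  shows "automorphism_B2 G"
proof -
  have "0 \<in> B2"
    by (simp add: mem_B2)
  then obtain D where D: "(G has_derivative D) (at 0)" "clinear2 D"
    using holo2_derivative[OF G(1)] by blast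
  have "D v = u"
    by (rule derivative_eq_on_line[OF D(1) v(3)])
  moreover have "D v' = u'"
    by (rule derivative_eq_on_line[OF D(1) v'(3)])
  moreover have contr: "norm (D x) \<le> norm x" for x
    by (rule Schwarz_derivative_B2[OF G D])
  ultimately have iso: "norm (D x) = norm x" for x
    using clinear2_isometry_if_isometric_on_basis[OF D(2) contr _ _ indep] v(1,2) v'(1,2) by simp
  show ?thesis
    using automorphism_B2_clinear2_isometry[OF D(2) iso] eq_derivative_on_B2[OF G D iso]
    by (rule automorphism_B2_cong)
qed

lemma independent_if_lines_meet_only_at_0:
  assumes v: "norm v = 1" "norm v' = 1"
    and meet: "(\<lambda>\<zeta>. cscale2 \<zeta> v) ` unit_disc \<inter> (\<lambda>\<zeta>. cscale2 \<zeta> v') ` unit_disc = {0}"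
  shows "fst v * snd v' - snd v * fst v' \<noteq> 0"
proof
  assume det: "fst v * snd v' - snd v * fst v' = 0"
  obtain l where l: "v' = cscale2 l v"
  proof (cases "fst v = 0")
    case True
    then have "snd v \<noteq> 0"
      using v(1) by (cases v) auto
    then have "snd v \<noteq> 0" "fst v' = 0"
      using True det by simp_all
    then show ?thesis
      using True that[of "snd v' / snd v"] by (simp add: cscale2_def prod_eq_iff)
  next
    case False
    then have "snd v' = fst v' / fst v * snd v"
      using det by (simp add: field_simps)
    then show ?thesis
      using False that[of "fst v' / fst v"] by (simp add: cscale2_def prod_eq_iff)
  qed
  then have "cmod l = 1"
    using v by (simp add: norm_cscale2)
  then have "cnj l * l = 1"
    by (metis complex_norm_square mult.commute of_real_1 power_one)
  then have "cscale2 (1/2) v = cscale2 (cnj l / 2) v'"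
    by (simp add: l cscale2_assoc mult.commute)
  moreover have "(1/2 :: complex) \<in> unit_disc" "cnj l / 2 \<in> unit_disc"
    using \<open>cmod l = 1\<close> by (simp_all add: mem_unit_disc norm_divide)
  ultimately have "cscale2 (1/2) v \<in> (\<lambda>\<zeta>. cscale2 \<zeta> v) ` unit_disc \<inter> (\<lambda>\<zeta>. cscale2 \<zeta> v') ` unit_disc"
    by (metis IntI image_eqI)
  then have "norm (cscale2 (1/2) v) = 0"
    using meet by simp
  then show False
    using v(1) by (simp add: norm_cscale2)
qed

lemma automorphism_B2_if_conjugate:
  assumes T: "automorphism_B2 T\<^sub>1" "automorphism_B2 T\<^sub>2" and F: "F ` B2 \<subseteq> B2"
    and G: "automorphism_B2 (T\<^sub>2 \<circ> F \<circ> inv_into B2 T\<^sub>1)"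
  shows "automorphism_B2 F"
proof -
  have "automorphism_B2 (inv_into B2 T\<^sub>2 \<circ> ((T\<^sub>2 \<circ> F \<circ> inv_into B2 T\<^sub>1) \<circ> T\<^sub>1))"
    using automorphism_B2_comp[OF automorphism_B2_comp[OF T(1) G] automorphism_B2_inv_into[OF T(2)]] .
  moreover have "F x = (inv_into B2 T\<^sub>2 \<circ> ((T\<^sub>2 \<circ> F \<circ> inv_into B2 T\<^sub>1) \<circ> T\<^sub>1)) x" if x: "x \<in> B2" for x
  proof -
    have "F x \<in> B2"
      using F x by blast
    then show ?thesis
      using T x by (simp add: automorphism_B2_inv_into_left)
  qed
  ultimately show ?thesis
    by (rule automorphism_B2_cong)
qed

lemma conjugate_self_map_B2:
  assumes F: "holo2 F B2" "F ` B2 \<subseteq> B2" and z: "z \<in> B2"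
    and T: "automorphism_B2 T\<^sub>1" "T\<^sub>1 z = 0" "automorphism_B2 T\<^sub>2" "T\<^sub>2 (F z) = 0"
  shows "holo2 (T\<^sub>2 \<circ> F \<circ> inv_into B2 T\<^sub>1) B2" "(T\<^sub>2 \<circ> F \<circ> inv_into B2 T\<^sub>1) ` B2 \<subseteq> B2"
    and "(T\<^sub>2 \<circ> F \<circ> inv_into B2 T\<^sub>1) 0 = 0"
proof -
  have S: "automorphism_B2 (inv_into B2 T\<^sub>1)"
    using T(1) by (rule automorphism_B2_inv_into)
  have FB: "F x \<in> B2" if "x \<in> B2" for x
    using F(2) that by blast
  have "holo2 (T\<^sub>2 \<circ> F) B2"
    using holo2_comp[OF F(1) _ F(2)] T(3) by (simp add: automorphism_B2_def)
  moreover have "holo2 (inv_into B2 T\<^sub>1) B2"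
    using S by (simp add: automorphism_B2_def)
  ultimately show "holo2 (T\<^sub>2 \<circ> F \<circ> inv_into B2 T\<^sub>1) B2"
    using holo2_comp[of "inv_into B2 T\<^sub>1" B2 "T\<^sub>2 \<circ> F" B2] automorphism_B2_image[OF S]
    by simp
  show "(T\<^sub>2 \<circ> F \<circ> inv_into B2 T\<^sub>1) ` B2 \<subseteq> B2"
    using automorphism_B2_mem[OF S] automorphism_B2_mem[OF T(3)] FB
    by (simp add: image_subset_iff)
  show "(T\<^sub>2 \<circ> F \<circ> inv_into B2 T\<^sub>1) 0 = 0"
    using automorphism_B2_inv_into_left[OF T(1) z] T by simp
qed

lemma conjugate_linear_on_geodesic:
  assumes \<psi>: "complex_geodesic \<psi>" "complex_geodesic (F \<circ> \<psi>)" and s: "s \<in> unit_disc" "\<psi> s = z"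
    and T: "automorphism_B2 T\<^sub>1" "T\<^sub>1 z = 0" "automorphism_B2 T\<^sub>2" "T\<^sub>2 (F z) = 0"
  obtains v u where "norm v = 1" "norm u = 1"
    "\<And>\<zeta>. \<zeta> \<in> unit_disc \<Longrightarrow> (T\<^sub>2 \<circ> F \<circ> inv_into B2 T\<^sub>1) (cscale2 \<zeta> v) = cscale2 \<zeta> u"
    "(\<lambda>\<zeta>. cscale2 \<zeta> v) ` unit_disc = T\<^sub>1 ` \<psi> ` unit_disc"
proof -
  let ?m = "Moebius_function 0 (-s)"
  have "T\<^sub>1 (\<psi> s) = 0" "T\<^sub>2 ((F \<circ> \<psi>) s) = 0"
    using s(2) T by simp_all
  then obtain v u where v: "norm v = 1" "\<And>\<zeta>. \<zeta> \<in> unit_disc \<Longrightarrow> T\<^sub>1 (\<psi> (?m \<zeta>)) = cscale2 \<zeta> v"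
      "(\<lambda>\<zeta>. cscale2 \<zeta> v) ` unit_disc = T\<^sub>1 ` \<psi> ` unit_disc"
    and u: "norm u = 1" "\<And>\<zeta>. \<zeta> \<in> unit_disc \<Longrightarrow> T\<^sub>2 ((F \<circ> \<psi>) (?m \<zeta>)) = cscale2 \<zeta> u"
    using complex_geodesic_normal_form[OF \<psi>(1) s(1) T(1)] complex_geodesic_normal_form[OF \<psi>(2) s(1) T(3)]
    by metis
  have "(T\<^sub>2 \<circ> F \<circ> inv_into B2 T\<^sub>1) (cscale2 \<zeta> v) = cscale2 \<zeta> u" if \<zeta>: "\<zeta> \<in> unit_disc" for \<zeta>
  proof -
    have "?m \<zeta> \<in> unit_disc"
      using Moebius_function_image_unit_disc[of "-s"] s(1) \<zeta> by (auto simp: mem_unit_disc)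
    then have "\<psi> (?m \<zeta>) \<in> B2"
      using \<psi>(1) by (auto simp: complex_geodesic_def)
    then have "inv_into B2 T\<^sub>1 (cscale2 \<zeta> v) = \<psi> (?m \<zeta>)"
      using automorphism_B2_inv_into_left[OF T(1)] v(2)[OF \<zeta>] by metis
    then show ?thesis
      using u(2)[OF \<zeta>] by simp
  qed
  with v(1,3) u(1) show ?thesis
    using that by blast
qed

lemma automorphism_B2_conjugate_if_geodesics_meet_once:
  assumes F: "holo2 F B2" "F ` B2 \<subseteq> B2" and z: "z \<in> B2"
    and geo: "complex_geodesic \<phi>" "complex_geodesic \<eta>" "complex_geodesic (F \<circ> \<phi>)"
      "complex_geodesic (F \<circ> \<eta>)"
    and meet: "\<phi> ` unit_disc \<inter> \<eta> ` unit_disc = {z}"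
    and s: "s \<in> unit_disc" "\<phi> s = z" and t: "t \<in> unit_disc" "\<eta> t = z"
    and T\<^sub>1: "automorphism_B2 T\<^sub>1" "T\<^sub>1 z = 0" and T\<^sub>2: "automorphism_B2 T\<^sub>2" "T\<^sub>2 (F z) = 0"
  shows "automorphism_B2 (T\<^sub>2 \<circ> F \<circ> inv_into B2 T\<^sub>1)"
proof -
  obtain v u where v: "norm v = 1" "norm u = 1"
      "\<And>\<zeta>. \<zeta> \<in> unit_disc \<Longrightarrow> (T\<^sub>2 \<circ> F \<circ> inv_into B2 T\<^sub>1) (cscale2 \<zeta> v) = cscale2 \<zeta> u"
      "(\<lambda>\<zeta>. cscale2 \<zeta> v) ` unit_disc = T\<^sub>1 ` \<phi> ` unit_disc"
    using conjugate_linear_on_geodesic[OF geo(1,3) s T\<^sub>1 T\<^sub>2] by blast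
  obtain v' u' where v': "norm v' = 1" "norm u' = 1"
      "\<And>\<zeta>. \<zeta> \<in> unit_disc \<Longrightarrow> (T\<^sub>2 \<circ> F \<circ> inv_into B2 T\<^sub>1) (cscale2 \<zeta> v') = cscale2 \<zeta> u'"
      "(\<lambda>\<zeta>. cscale2 \<zeta> v') ` unit_disc = T\<^sub>1 ` \<eta> ` unit_disc"
    using conjugate_linear_on_geodesic[OF geo(2,4) t T\<^sub>1 T\<^sub>2] by blast
  have "inj_on T\<^sub>1 B2" "\<phi> ` unit_disc \<subseteq> B2" "\<eta> ` unit_disc \<subseteq> B2"
    using T\<^sub>1(1) geo(1,2) by (simp_all add: automorphism_B2_def bij_betw_def complex_geodesic_def)
  then have "(\<lambda>\<zeta>. cscale2 \<zeta> v) ` unit_disc \<inter> (\<lambda>\<zeta>. cscale2 \<zeta> v') ` unit_disc = {0}"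
    unfolding v(4) v'(4) using meet T\<^sub>1(2) by (simp flip: inj_on_image_Int)
  then have "fst v * snd v' - snd v * fst v' \<noteq> 0"
    by (rule independent_if_lines_meet_only_at_0[OF v(1) v'(1)])
  with conjugate_self_map_B2[OF F z T\<^sub>1 T\<^sub>2] v(1-3) v'(1-3) show ?thesis
    by (rule automorphism_B2_if_linear_on_two_lines)
qed

theorem lemma3p1:
  fixes F :: "complex \<times> complex \<Rightarrow> complex \<times> complex"
    and \<phi> \<eta> :: "complex \<Rightarrow> complex \<times> complex"
    and z :: "complex \<times> complex"
  assumes "holo2 F B2" and "F ` B2 \<subseteq> B2"
    and "complex_geodesic \<phi>" and "complex_geodesic \<eta>"
    and "z \<in> B2" and "\<phi> ` unit_disc \<inter> \<eta> ` unit_disc = {z}"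
    and "complex_geodesic (F \<circ> \<phi>)" and "complex_geodesic (F \<circ> \<eta>)"
  shows "automorphism_B2 F"
proof -
  have "z \<in> \<phi> ` unit_disc" "z \<in> \<eta> ` unit_disc"
    using assms(6) by blast+
  then obtain s t where s: "s \<in> unit_disc" "\<phi> s = z" and t: "t \<in> unit_disc" "\<eta> t = z"
    by (metis imageE)
  obtain T\<^sub>1 where T\<^sub>1: "automorphism_B2 T\<^sub>1" "T\<^sub>1 z = 0"
    using automorphism_B2_transitive[OF assms(5)] .
  have "F z \<in> B2"
    using assms(2,5) by blast
  then obtain T\<^sub>2 where T\<^sub>2: "automorphism_B2 T\<^sub>2" "T\<^sub>2 (F z) = 0"
    by (rule automorphism_B2_transitive)
  have "automorphism_B2 (T\<^sub>2 \<circ> F \<circ> inv_into B2 T\<^sub>1)"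
    using assms s t T\<^sub>1 T\<^sub>2
    by (intro automorphism_B2_conjugate_if_geodesics_meet_once[of F z \<phi> \<eta>]) simp_all
  then show ?thesis
    using T\<^sub>1(1) T\<^sub>2(1) assms(2) automorphism_B2_if_conjugate by blast
qed

end
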